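(* Assume the Two-interval setup below, with $\pm a$ in the limit point case and $0^\mp$ in the limit circle nonoscillatory case. Let $R_0\in SL(2,\mathbb R)$ with $(R_0)_{11}=(R_0)_{22}$, and let $S_{R_0}$ be the restriction of $S_{max}$ to $\{g:(\tilde g(0^-),\tilde g'(0^-))^T=R_0(\tilde g(0^+),\tilde g'(0^+))^T\}$. Define $\alpha,\alpha'\in(0,\pi]$ from $R_0=\begin{pmatrix}R_{11}&R_{12}\\R_{21}&R_{11}\end{pmatrix}$ by: $\alpha=\cot^{-1}\frac{R_{11}+1}{R_{12}}$, $\alpha'=\cot^{-1}\frac{R_{11}-1}{R_{12}}$ if $R_{12}\ne0$; $\alpha=\cot^{-1}\frac{-R_{21}}2$, $\alpha'=\pi$ if $R_{12}=0$, $R_{11}=-1$; $\alpha=\pi$, $\alpha'=\cot^{-1}\frac{R_{21}}2$ if $R_{12}=0$, $R_{11}=1$. Then $S_{R_0}$ is unitarily equivalent to $T^+_\alpha\oplus T^+_{\alpha'}$ in $L^2((0,a);rdx)\oplus L^2((0,a);rdx)$.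
   Context: Two-interval setup. Let $a\in(0,\infty]$ and let $p,q,r$ be real measurable on $(-a,0)\cup(0,a)$, even ($p(-x)=p(x)$ etc.), with $p,r>0$ a.e. and $1/p,q,r\in L^1_{loc}((-a,0))$ (hence also on $(0,a)$). Let $\tau^\pm$ be the expression $\frac1r[-\frac{d}{dx}p\frac{d}{dx}+q]$ on $(0,a)$ resp. $(-a,0)$, with maximal/minimal operators $T^\pm_{max},T^\pm_{min}$ in $L^2$ of the respective interval with weight $r$ (maximal: $\tau^\pm$ on $g\in L^2$ with $g,pg'\in AC_{loc}$ and $\tau^\pm g\in L^2$; minimal: closure of restriction to compactly supported elements); $S_{max}=T^-_{max}\oplus T^+_{max}$, $S_{min}=T^-_{min}\oplus T^+_{min}$, and $S_{min}$ is assumed bounded below by $\lambda_0$. $y^{[1]}=py'$, $W(f,g)=fg^{[1]}-f^{[1]}g$. Limit circle at an endpoint: all solutions of $\tau u=zu$ in $L^2(rdx)$ near it for all $z$; limit point otherwise. At $0^+$ (left endpoint of $(0,a)$) fix principal/nonprincipal solutions $u_{0^+},\hat u_{0^+}$ of $\tau u=\lambda_0u$ (principal: real solution nonvanishing near $0^+$ with $\int p^{-1}u^{-2}=\infty$ near $0^+$; nonprincipal: linearly independent real solution) with $W(\hat u_{0^+},u_{0^+})=1$, and at $0^-$ use $u_{0^-}(x)=-u_{0^+}(-x)$, $\hat u_{0^-}(x)=\hat u_{0^+}(-x)$. Generalized boundary values: $\tilde g(0^+)=-\lim_{x\downarrow0}W(u_{0^+},g)(x)$, $\tilde g'(0^+)=\lim_{x\downarrow0}W(\hat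 u_{0^+},g)(x)$, $\tilde g(0^-)=-\lim_{x\uparrow0}W(u_{0^-},g)(x)$, $\tilde g'(0^-)=\lim_{x\uparrow0}W(\hat u_{0^-},g)(x)$. For $\alpha\in(0,\pi]$, $T^+_\alpha$ is the restriction of $T^+_{max}$ to $\{g:\tilde g(0^+)\cos\alpha+\tilde g'(0^+)\sin\alpha=0\}$. $\cot^{-1}$ takes values in $(0,\pi)$. *)

theory Defs
  imports "HOL-Analysis.Analysis"
begin

definition arccot :: "real \<Rightarrow> real" where
  "arccot x = pi / 2 - arctan x"   (* inverse cotangent with values in (0, pi) *)

definition intv :: "ereal \<Rightarrow> ereal \<Rightarrow> real set" where
  "intv lo hi = {x. lo < ereal x \<and> ereal x < hi}"

(* L^2((lo,hi); r dx) membership of a representative *)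
definition L2w :: "(real \<Rightarrow> real) \<Rightarrow> real set \<Rightarrow> (real \<Rightarrow> complex) \<Rightarrow> bool" where
  "L2w r A g \<longleftrightarrow> set_borel_measurable lborel A g \<and>
     set_integrable lborel A (\<lambda>x. r x * (cmod (g x))\<^sup>2)"

definition normsq :: "(real \<Rightarrow> real) \<Rightarrow> real set \<Rightarrow> (real \<Rightarrow> complex) \<Rightarrow> real" where
  "normsq r A g = (LINT x:A|lborel. r x * (cmod (g x))\<^sup>2)"

definition innerw :: "(real \<Rightarrow> real) \<Rightarrow> real set \<Rightarrow> (real \<Rightarrow> complex) \<Rightarrow> (real \<Rightarrow> complex) \<Rightarrow> complex" where
  "innerw r A f g = (LINT x:A|lborel. complex_of_real (r x) * f x * cnj (g x))"

(* equality almost everywhere on A (equality as elements of L^2) *)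
definition aeq :: "real set \<Rightarrow> (real \<Rightarrow> complex) \<Rightarrow> (real \<Rightarrow> complex) \<Rightarrow> bool" where
  "aeq A g h \<longleftrightarrow> (AE x in lborel. x \<in> A \<longrightarrow> g x = h x)"

(* Quasi-derivative relation on the interval I: g and g1 (= p g') are locally
   absolutely continuous on I (indefinite integrals of L^1_loc functions),
   g' = g1/p and (g1)' = q g - r f, i.e. f = tau g = (1/r)(-(p g')' + q g). *)
definition qd :: "(real \<Rightarrow> real) \<Rightarrow> (real \<Rightarrow> real) \<Rightarrow> (real \<Rightarrow> real) \<Rightarrow> real set \<Rightarrow>
    (real \<Rightarrow> complex) \<Rightarrow> (real \<Rightarrow> complex) \<Rightarrow> (real \<Rightarrow> complex) \<Rightarrow> bool" where
  "qd p q r I g g1 f \<longleftrightarrow> (\<forall>x\<in>I. \<forall>y\<in>I. x \<le> y \<longrightarrow>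
      set_integrable lborel {x..y} (\<lambda>t. g1 t / complex_of_real (p t)) \<and>
      g y - g x = (LINT t:{x..y}|lborel. g1 t / complex_of_real (p t)) \<and>
      set_integrable lborel {x..y} (\<lambda>t. complex_of_real (q t) * g t - complex_of_real (r t) * f t) \<and>
      g1 y - g1 x = (LINT t:{x..y}|lborel. complex_of_real (q t) * g t - complex_of_real (r t) * f t))"

definition solves :: "(real \<Rightarrow> real) \<Rightarrow> (real \<Rightarrow> real) \<Rightarrow> (real \<Rightarrow> real) \<Rightarrow> real set \<Rightarrow>
    complex \<Rightarrow> (real \<Rightarrow> complex) \<Rightarrow> (real \<Rightarrow> complex) \<Rightarrow> bool" where
  "solves p q r I z u u1 \<longleftrightarrow> qd p q r I u u1 (\<lambda>t. z * u t)"

definition maxrel :: "(real \<Rightarrow> real) \<Rightarrow> (real \<Rightarrow> real) \<Rightarrow> (real \<Rightarrow> real) \<Rightarrow> real set \<Rightarrow>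
    (real \<Rightarrow> complex) \<Rightarrow> (real \<Rightarrow> complex) \<Rightarrow> bool" where
  "maxrel p q r I g f \<longleftrightarrow> L2w r I g \<and> L2w r I f \<and> (\<exists>g1. qd p q r I g g1 f)"

definition preminrel :: "(real \<Rightarrow> real) \<Rightarrow> (real \<Rightarrow> real) \<Rightarrow> (real \<Rightarrow> real) \<Rightarrow> real set \<Rightarrow>
    (real \<Rightarrow> complex) \<Rightarrow> (real \<Rightarrow> complex) \<Rightarrow> bool" where
  "preminrel p q r I g f \<longleftrightarrow> maxrel p q r I g f \<and>
     (\<exists>K. compact K \<and> K \<subseteq> I \<and> (\<forall>x\<in>I - K. g x = 0))"

definition LC_left :: "(real \<Rightarrow> real) \<Rightarrow> (real \<Rightarrow> real) \<Rightarrow> (real \<Rightarrow> real) \<Rightarrow> ereal \<Rightarrow> ereal \<Rightarrow> bool" where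
  "LC_left p q r lo hi \<longleftrightarrow> (\<forall>z u u1. solves p q r (intv lo hi) z u u1 \<longrightarrow>
     (\<exists>c\<in>intv lo hi. set_integrable lborel (intv lo (ereal c)) (\<lambda>x. r x * (cmod (u x))\<^sup>2)))"

definition LC_right :: "(real \<Rightarrow> real) \<Rightarrow> (real \<Rightarrow> real) \<Rightarrow> (real \<Rightarrow> real) \<Rightarrow> ereal \<Rightarrow> ereal \<Rightarrow> bool" where
  "LC_right p q r lo hi \<longleftrightarrow> (\<forall>z u u1. solves p q r (intv lo hi) z u u1 \<longrightarrow>
     (\<exists>c\<in>intv lo hi. set_integrable lborel (intv (ereal c) hi) (\<lambda>x. r x * (cmod (u x))\<^sup>2)))"

definition nonosc_left :: "(real \<Rightarrow> real) \<Rightarrow> (real \<Rightarrow> real) \<Rightarrow> (real \<Rightarrow> real) \<Rightarrow> ereal \<Rightarrow> ereal \<Rightarrow> bool" where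
  "nonosc_left p q r lo hi \<longleftrightarrow> (\<forall>lam::real. \<forall>u u1.
     solves p q r (intv lo hi) (complex_of_real lam) u u1 \<and> (\<forall>t\<in>intv lo hi. u t \<in> \<real>) \<and>
     (\<exists>t\<in>intv lo hi. u t \<noteq> 0) \<longrightarrow>
     (\<exists>c\<in>intv lo hi. finite {t\<in>intv lo (ereal c). u t = 0}))"

definition nonosc_right :: "(real \<Rightarrow> real) \<Rightarrow> (real \<Rightarrow> real) \<Rightarrow> (real \<Rightarrow> real) \<Rightarrow> ereal \<Rightarrow> ereal \<Rightarrow> bool" where
  "nonosc_right p q r lo hi \<longleftrightarrow> (\<forall>lam::real. \<forall>u u1.
     solves p q r (intv lo hi) (complex_of_real lam) u u1 \<and> (\<forall>t\<in>intv lo hi. u t \<in> \<real>) \<and>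
     (\<exists>t\<in>intv lo hi. u t \<noteq> 0) \<longrightarrow>
     (\<exists>c\<in>intv lo hi. finite {t\<in>intv (ereal c) hi. u t = 0}))"

type_synonym pfun = "(real \<Rightarrow> complex) \<times> (real \<Rightarrow> complex)"

definition padd :: "pfun \<Rightarrow> pfun \<Rightarrow> pfun" where
  "padd x y = ((\<lambda>t. fst x t + fst y t), (\<lambda>t. snd x t + snd y t))"

definition psmult :: "complex \<Rightarrow> pfun \<Rightarrow> pfun" where
  "psmult c x = ((\<lambda>t. c * fst x t), (\<lambda>t. c * snd x t))"

definition L2pair :: "(real \<Rightarrow> real) \<Rightarrow> real set \<Rightarrow> real set \<Rightarrow> pfun \<Rightarrow> bool" where
  "L2pair r A1 A2 x \<longleftrightarrow> L2w r A1 (fst x) \<and> L2w r A2 (snd x)"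

definition pnormsq :: "(real \<Rightarrow> real) \<Rightarrow> real set \<Rightarrow> real set \<Rightarrow> pfun \<Rightarrow> real" where
  "pnormsq r A1 A2 x = normsq r A1 (fst x) + normsq r A2 (snd x)"

definition pinner :: "(real \<Rightarrow> real) \<Rightarrow> real set \<Rightarrow> real set \<Rightarrow> pfun \<Rightarrow> pfun \<Rightarrow> complex" where
  "pinner r A1 A2 x y = innerw r A1 (fst x) (fst y) + innerw r A2 (snd x) (snd y)"

definition paeq :: "real set \<Rightarrow> real set \<Rightarrow> pfun \<Rightarrow> pfun \<Rightarrow> bool" where
  "paeq A1 A2 x y \<longleftrightarrow> aeq A1 (fst x) (fst y) \<and> aeq A2 (snd x) (snd y)"

(* graph membership modulo equality a.e. (i.e. as an operator on L^2 classes) *)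
definition in_graph :: "real set \<Rightarrow> real set \<Rightarrow> (pfun \<Rightarrow> pfun \<Rightarrow> bool) \<Rightarrow> pfun \<Rightarrow> pfun \<Rightarrow> bool" where
  "in_graph A1 A2 G x f \<longleftrightarrow> (\<exists>x' f'. paeq A1 A2 x x' \<and> paeq A1 A2 f f' \<and> G x' f')"

definition graph_closure :: "(real \<Rightarrow> real) \<Rightarrow> real set \<Rightarrow> real set \<Rightarrow> (pfun \<Rightarrow> pfun \<Rightarrow> bool) \<Rightarrow> pfun \<Rightarrow> pfun \<Rightarrow> bool" where
  "graph_closure r A1 A2 G x f \<longleftrightarrow> L2pair r A1 A2 x \<and> L2pair r A1 A2 f \<and>
     (\<exists>xs fs. (\<forall>n. G (xs n) (fs n)) \<and>
        (\<lambda>n. pnormsq r A1 A2 (padd (xs n) (psmult (-1) x))) \<longlonglongrightarrow> 0 \<and>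
        (\<lambda>n. pnormsq r A1 A2 (padd (fs n) (psmult (-1) f))) \<longlonglongrightarrow> 0)"

(* Unitary equivalence of operators G1 in L^2(A1)(+)L^2(A2) (weight r1) and
   G2 in L^2(B1)(+)L^2(B2) (weight r2): a linear, isometric, surjective U
   (acting on representatives, modulo a.e. equality) with U G1 U^{-1} = G2. *)
definition unit_equiv :: "(real \<Rightarrow> real) \<Rightarrow> real set \<Rightarrow> real set \<Rightarrow> (pfun \<Rightarrow> pfun \<Rightarrow> bool) \<Rightarrow>
    (real \<Rightarrow> real) \<Rightarrow> real set \<Rightarrow> real set \<Rightarrow> (pfun \<Rightarrow> pfun \<Rightarrow> bool) \<Rightarrow> bool" where
  "unit_equiv r1 A1 A2 G1 r2 B1 B2 G2 \<longleftrightarrow> (\<exists>U.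
     (\<forall>x. L2pair r1 A1 A2 x \<longrightarrow> L2pair r2 B1 B2 (U x)) \<and>
     (\<forall>x y c. L2pair r1 A1 A2 x \<and> L2pair r1 A1 A2 y \<longrightarrow>
        paeq B1 B2 (U (padd x (psmult c y))) (padd (U x) (psmult c (U y)))) \<and>
     (\<forall>x. L2pair r1 A1 A2 x \<longrightarrow> pnormsq r2 B1 B2 (U x) = pnormsq r1 A1 A2 x) \<and>
     (\<forall>y. L2pair r2 B1 B2 y \<longrightarrow> (\<exists>x. L2pair r1 A1 A2 x \<and> paeq B1 B2 (U x) y)) \<and>
     (\<forall>x f. L2pair r1 A1 A2 x \<and> L2pair r1 A1 A2 f \<longrightarrow>
        (in_graph A1 A2 G1 x f \<longleftrightarrow> in_graph B1 B2 G2 (U x) (U f))))"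

(* g (with quasi-derivative g1) has generalized boundary values (b0,b1) at 0+,
   w.r.t. principal/nonprincipal solutions u,uh (quasi-derivatives u1,uh1) at 0+ *)
definition bv_plus :: "(real \<Rightarrow> complex) \<Rightarrow> (real \<Rightarrow> complex) \<Rightarrow> (real \<Rightarrow> complex) \<Rightarrow> (real \<Rightarrow> complex) \<Rightarrow>
    (real \<Rightarrow> complex) \<Rightarrow> (real \<Rightarrow> complex) \<Rightarrow> complex \<Rightarrow> complex \<Rightarrow> bool" where
  "bv_plus u u1 uh uh1 g g1 b0 b1 \<longleftrightarrow>
     ((\<lambda>x. u x * g1 x - u1 x * g x) \<longlongrightarrow> - b0) (at_right 0) \<and>
     ((\<lambda>x. uh x * g1 x - uh1 x * g x) \<longlongrightarrow> b1) (at_right 0)"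

(* At 0-: u_{0-}(x) = -u(-x) has quasi-derivative u1(-x);
   uh_{0-}(x) = uh(-x) has quasi-derivative -uh1(-x) (p is even). *)
definition bv_minus :: "(real \<Rightarrow> complex) \<Rightarrow> (real \<Rightarrow> complex) \<Rightarrow> (real \<Rightarrow> complex) \<Rightarrow> (real \<Rightarrow> complex) \<Rightarrow>
    (real \<Rightarrow> complex) \<Rightarrow> (real \<Rightarrow> complex) \<Rightarrow> complex \<Rightarrow> complex \<Rightarrow> bool" where
  "bv_minus u u1 uh uh1 g g1 b0 b1 \<longleftrightarrow>
     ((\<lambda>x. (- u (-x)) * g1 x - u1 (-x) * g x) \<longlongrightarrow> - b0) (at_left 0) \<and>
     ((\<lambda>x. uh (-x) * g1 x - (- uh1 (-x)) * g x) \<longlongrightarrow> b1) (at_left 0)"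

definition Talpha :: "(real \<Rightarrow> real) \<Rightarrow> (real \<Rightarrow> real) \<Rightarrow> (real \<Rightarrow> real) \<Rightarrow> ereal \<Rightarrow>
    (real \<Rightarrow> complex) \<Rightarrow> (real \<Rightarrow> complex) \<Rightarrow> (real \<Rightarrow> complex) \<Rightarrow> (real \<Rightarrow> complex) \<Rightarrow>
    real \<Rightarrow> (real \<Rightarrow> complex) \<Rightarrow> (real \<Rightarrow> complex) \<Rightarrow> bool" where
  "Talpha p q r a u u1 uh uh1 \<alpha> g f \<longleftrightarrow> maxrel p q r (intv 0 a) g f \<and>
     (\<exists>g1 b0 b1. qd p q r (intv 0 a) g g1 f \<and> bv_plus u u1 uh uh1 g g1 b0 b1 \<and>
        b0 * complex_of_real (cos \<alpha>) + b1 * complex_of_real (sin \<alpha>) = 0)"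

definition Smaxrel :: "(real \<Rightarrow> real) \<Rightarrow> (real \<Rightarrow> real) \<Rightarrow> (real \<Rightarrow> real) \<Rightarrow> ereal \<Rightarrow> pfun \<Rightarrow> pfun \<Rightarrow> bool" where
  "Smaxrel p q r a x f \<longleftrightarrow> maxrel p q r (intv (-a) 0) (fst x) (fst f) \<and> maxrel p q r (intv 0 a) (snd x) (snd f)"

definition Sminrel :: "(real \<Rightarrow> real) \<Rightarrow> (real \<Rightarrow> real) \<Rightarrow> (real \<Rightarrow> real) \<Rightarrow> ereal \<Rightarrow> pfun \<Rightarrow> pfun \<Rightarrow> bool" where
  "Sminrel p q r a = graph_closure r (intv (-a) 0) (intv 0 a)
     (\<lambda>x f. preminrel p q r (intv (-a) 0) (fst x) (fst f) \<and> preminrel p q r (intv 0 a) (snd x) (snd f))"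

definition SR0rel :: "(real \<Rightarrow> real) \<Rightarrow> (real \<Rightarrow> real) \<Rightarrow> (real \<Rightarrow> real) \<Rightarrow> ereal \<Rightarrow>
    (real \<Rightarrow> complex) \<Rightarrow> (real \<Rightarrow> complex) \<Rightarrow> (real \<Rightarrow> complex) \<Rightarrow> (real \<Rightarrow> complex) \<Rightarrow>
    real \<Rightarrow> real \<Rightarrow> real \<Rightarrow> real \<Rightarrow> pfun \<Rightarrow> pfun \<Rightarrow> bool" where
  "SR0rel p q r a u u1 uh uh1 R11 R12 R21 R22 x f \<longleftrightarrow> Smaxrel p q r a x f \<and>
     (\<exists>gm1 gp1 m0 m1 b0 b1.
        qd p q r (intv (-a) 0) (fst x) gm1 (fst f) \<and> qd p q r (intv 0 a) (snd x) gp1 (snd f) \<and>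
        bv_minus u u1 uh uh1 (fst x) gm1 m0 m1 \<and> bv_plus u u1 uh uh1 (snd x) gp1 b0 b1 \<and>
        m0 = complex_of_real R11 * b0 + complex_of_real R12 * b1 \<and>
        m1 = complex_of_real R21 * b0 + complex_of_real R22 * b1)"

end

theory Submission
  imports Defs
begin

(* With (R g)(x) = g(-x), the map
     U (g_-, g_+) = ((R g_- - g_+) / sqrt 2, (R g_- + g_+) / sqrt 2)
   is unitary from L^2((-a,0)) (+) L^2((0,a)) onto L^2((0,a)) (+) L^2((0,a)), because r is even.
   Since p, q, r are even, R carries solutions of the differential relation on (-a,0) to solutions
   on (0,a), flipping the sign of the quasi-derivative; hence boundary values (m0, m1) at 0- become
   (m0, -m1) at 0+.  If g_+ has boundary values (b0, b1) at 0+, the two components of U g have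
   boundary values (m0 - b0, -m1 - b1) / sqrt 2 and (m0 + b0, b1 - m1) / sqrt 2, and for R0 in
   SL(2,R) with equal diagonal entries the coupling (m0, m1) = R0 (b0, b1) is equivalent to the
   separated conditions with angles alpha and alpha' for these two pairs.  Only the evenness of
   the coefficients and the measurability of r are needed for this; the remaining hypotheses of
   the setting are what make the boundary values meaningful and the operators self-adjoint. *)

lemma indicator_image_uminus: "indicator (uminus ` S) (x::real) = (indicator S (-x) :: 'b::zero_neq_one)"
  by (simp add: indicator_def image_iff) (metis minus_minus)

lemma image_uminus_intv: "uminus ` intv lo hi = intv (-hi) (-lo)"
proof -
  have "-x \<in> intv lo hi \<longleftrightarrow> x \<in> intv (-hi) (-lo)" for x
    by (auto simp: intv_def ereal_uminus_less_reorder ereal_less_uminus_reorder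
        simp flip: uminus_ereal.simps)
  moreover have "uminus ` A = {x. - x \<in> A}" for A :: "real set"
    by (auto intro: image_eqI[of _ uminus "- _"])
  ultimately show ?thesis by auto
qed

lemma intv_convex: "x \<in> intv lo hi \<Longrightarrow> y \<in> intv lo hi \<Longrightarrow> {x..y} \<subseteq> intv lo hi"
  by (auto simp: intv_def) (meson ereal_less_eq(3) less_le_trans le_less_trans)+

lemma intv_sets [measurable]: "intv lo hi \<in> sets lborel"
proof -
  have "intv lo hi = ereal -` {lo<..<hi} \<inter> space lborel" by (auto simp: intv_def)
  moreover have "(\<lambda>x::real. ereal x) \<in> borel_measurable lborel"
    by (rule borel_measurable_ereal) simp
  ultimately show ?thesis
    using measurable_sets[of "\<lambda>x::real. ereal x" lborel borel "{lo<..<hi}"] by simp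
qed

lemma set_integrable_reflect_iff:
  fixes f :: "real \<Rightarrow> 'a::{banach, second_countable_topology}"
  shows "set_integrable lborel (uminus ` S) (\<lambda>t. f (-t)) \<longleftrightarrow> set_integrable lborel S f"
  unfolding set_integrable_def
  using lborel_integrable_real_affine_iff[of "-1" "\<lambda>x. indicator S x *\<^sub>R f x" 0]
  by (simp add: indicator_image_uminus)

lemma set_integral_reflect_image:
  fixes f :: "real \<Rightarrow> 'a::{banach, second_countable_topology}"
  shows "(LINT t:uminus ` S|lborel. f (-t)) = (LINT t:S|lborel. f t)"
  unfolding set_lebesgue_integral_def
  using lborel_integral_real_affine[of "-1" "\<lambda>x. indicator S x *\<^sub>R f x" 0]
  by (simp add: indicator_image_uminus)

lemma set_borel_measurable_reflect:
  fixes f :: "real \<Rightarrow> 'a::real_normed_vector"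
  assumes "set_borel_measurable lborel S f"
  shows "set_borel_measurable lborel (uminus ` S) (\<lambda>t. f (-t))"
proof -
  have "(\<lambda>t. indicator S t *\<^sub>R f t) \<in> borel_measurable lborel"
    using assms unfolding set_borel_measurable_def .
  then have "(\<lambda>t. indicator S (-t) *\<^sub>R f (-t)) \<in> borel_measurable lborel"
    using measurable_compose[of uminus lborel borel] by simp
  then show ?thesis unfolding set_borel_measurable_def by (simp add: indicator_image_uminus)
qed

lemma set_borel_measurable_subset:
  fixes f :: "'a \<Rightarrow> 'b::{second_countable_topology, real_normed_vector}"
  assumes "set_borel_measurable M A f" "B \<subseteq> A" "B \<in> sets M"
  shows "set_borel_measurable M B f"
proof -
  have e: "(\<lambda>x. indicator B x *\<^sub>R f x) = (\<lambda>x. indicator B x *\<^sub>R (indicator A x *\<^sub>R f x))"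
    using assms(2) by (auto simp: fun_eq_iff split: split_indicator)
  show ?thesis
    using assms(3,1) unfolding set_borel_measurable_def e
    by (rule borel_measurable_scaleR[OF borel_measurable_indicator])
qed

lemma null_sets_image_uminus:
  assumes "N \<in> null_sets lborel"
  shows "uminus ` N \<in> null_sets (lborel :: real measure)"
proof -
  have N: "N \<in> sets borel" using assms by auto
  have uminus_meas: "(uminus :: real \<Rightarrow> real) \<in> measurable lborel borel" by simp
  have "emeasure lborel (uminus -` N \<inter> space lborel) = emeasure (distr lborel borel uminus) N"
    using emeasure_distr[OF uminus_meas N] by simp
  then have "uminus -` N \<in> null_sets lborel"
    using assms measurable_sets[OF uminus_meas N] by (simp add: lborel_distr_uminus null_sets_def)
  moreover have "uminus ` N = uminus -` N" by force
  ultimately show ?thesis by simp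
qed

lemma aeq_reflect:
  assumes "aeq S g h"
  shows "aeq (uminus ` S) (\<lambda>t. g (-t)) (\<lambda>t. h (-t))"
proof -
  obtain N where N: "N \<in> null_sets lborel" "{x. \<not> (x \<in> S \<longrightarrow> g x = h x)} \<subseteq> N"
    using assms unfolding aeq_def by (auto elim!: AE_E simp: null_sets_def)
  have "{x. \<not> (x \<in> uminus ` S \<longrightarrow> g (-x) = h (-x))} \<subseteq> uminus ` N"
    using N(2) by (auto simp: image_iff)
  then show ?thesis unfolding aeq_def using null_sets_image_uminus[OF N(1)] by (intro AE_I') auto
qed

lemma set_integral_lincomb:
  fixes F H :: "'a \<Rightarrow> 'b::{real_normed_field, banach, second_countable_topology}"
  assumes "set_integrable M A F" "set_integrable M A H"
  shows "set_integrable M A (\<lambda>t. c * F t + d * H t)"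
    and "(LINT t:A|M. c * F t + d * H t) = c * (LINT t:A|M. F t) + d * (LINT t:A|M. H t)"
  using set_integral_add[of M A "\<lambda>t. c * F t" "\<lambda>t. d * H t"] assms by auto

lemma set_borel_measurable_lincomb:
  fixes g h :: "'a \<Rightarrow> 'b::{real_normed_algebra, second_countable_topology}"
  assumes "set_borel_measurable M A g" "set_borel_measurable M A h"
  shows "set_borel_measurable M A (\<lambda>t. c * g t + d * h t)"
proof -
  have [measurable]: "(\<lambda>t. indicator A t *\<^sub>R g t) \<in> borel_measurable M"
      "(\<lambda>t. indicator A t *\<^sub>R h t) \<in> borel_measurable M"
    using assms unfolding set_borel_measurable_def by auto
  have e: "(\<lambda>t. indicator A t *\<^sub>R (c * g t + d * h t))
      = (\<lambda>t. c * (indicator A t *\<^sub>R g t) + d * (indicator A t *\<^sub>R h t))"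
    by (auto simp: indicator_def)
  show ?thesis unfolding set_borel_measurable_def e by measurable
qed

lemma aeq_lincomb:
  assumes "aeq A f f'" "aeq A g g'"
  shows "aeq A (\<lambda>t. c * f t + d * g t) (\<lambda>t. c * f' t + d * g' t)"
  using assms unfolding aeq_def by eventually_elim auto

lemma norm_lincomb_sq_le:
  "(cmod (c * g + d * h))\<^sup>2 \<le> 2 * (cmod c)\<^sup>2 * (cmod g)\<^sup>2 + 2 * (cmod d)\<^sup>2 * (cmod h)\<^sup>2"
proof -
  have sq_sum: "(x + y)\<^sup>2 \<le> 2 * x\<^sup>2 + 2 * y\<^sup>2" for x y :: real
  proof -
    have "(x + y)\<^sup>2 = 2 * x\<^sup>2 + 2 * y\<^sup>2 - (x - y)\<^sup>2" by (simp add: power2_eq_square algebra_simps)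
    then show ?thesis by simp
  qed
  have "cmod (c * g + d * h) \<le> cmod c * cmod g + cmod d * cmod h"
    by (metis norm_mult norm_triangle_ineq)
  then have "(cmod (c * g + d * h))\<^sup>2 \<le> (cmod c * cmod g + cmod d * cmod h)\<^sup>2"
    by (simp add: power_mono)
  also have "\<dots> \<le> 2 * (cmod c)\<^sup>2 * (cmod g)\<^sup>2 + 2 * (cmod d)\<^sup>2 * (cmod h)\<^sup>2"
    using sq_sum[of "cmod c * cmod g" "cmod d * cmod h"] by (simp add: power_mult_distrib)
  finally show ?thesis .
qed

lemma L2w_lincomb:
  assumes "L2w r A g" "L2w r A h" "set_borel_measurable lborel A r"
  shows "L2w r A (\<lambda>t. c * g t + d * h t)"
proof -
  have mg: "set_borel_measurable lborel A g" and ig: "set_integrable lborel A (\<lambda>x. r x * (cmod (g x))\<^sup>2)"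
    and mh: "set_borel_measurable lborel A h" and ih: "set_integrable lborel A (\<lambda>x. r x * (cmod (h x))\<^sup>2)"
    using assms unfolding L2w_def by auto
  have m: "set_borel_measurable lborel A (\<lambda>t. c * g t + d * h t)"
    by (rule set_borel_measurable_lincomb[OF mg mh])
  have m2: "set_borel_measurable lborel A (\<lambda>t. r t * (cmod (c * g t + d * h t))\<^sup>2)"
  proof -
    have [measurable]: "(\<lambda>t. indicator A t *\<^sub>R r t) \<in> borel_measurable lborel"
        "(\<lambda>t. indicator A t *\<^sub>R (c * g t + d * h t)) \<in> borel_measurable lborel"
      using assms(3) m unfolding set_borel_measurable_def by auto
    have e: "(\<lambda>t. indicator A t *\<^sub>R (r t * (cmod (c * g t + d * h t))\<^sup>2))
        = (\<lambda>t. (indicator A t *\<^sub>R r t) * (cmod (indicator A t *\<^sub>R (c * g t + d * h t)))\<^sup>2)"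
      by (auto simp: indicator_def)
    show ?thesis unfolding set_borel_measurable_def e by measurable
  qed
  have bound: "set_integrable lborel A
      (\<lambda>x. 2 * (cmod c)\<^sup>2 * (r x * (cmod (g x))\<^sup>2) + 2 * (cmod d)\<^sup>2 * (r x * (cmod (h x))\<^sup>2))"
    using ig ih by (intro set_integral_add(1) set_integrable_mult_right)
  have "set_integrable lborel A (\<lambda>x. r x * (cmod (c * g x + d * h x))\<^sup>2)"
  proof (rule set_integrable_bound[OF bound m2], rule AE_I2, rule impI)
    fix x
    let ?G = "(cmod (g x))\<^sup>2" and ?H = "(cmod (h x))\<^sup>2"
    have "\<bar>r x\<bar> * (cmod (c * g x + d * h x))\<^sup>2 \<le> \<bar>r x\<bar> * (2 * (cmod c)\<^sup>2 * ?G + 2 * (cmod d)\<^sup>2 * ?H)"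
      by (intro mult_left_mono norm_lincomb_sq_le) auto
    also have "\<dots> = \<bar>2 * (cmod c)\<^sup>2 * (r x * ?G) + 2 * (cmod d)\<^sup>2 * (r x * ?H)\<bar>"
    proof -
      have "2 * (cmod c)\<^sup>2 * (r x * ?G) + 2 * (cmod d)\<^sup>2 * (r x * ?H)
          = r x * (2 * (cmod c)\<^sup>2 * ?G + 2 * (cmod d)\<^sup>2 * ?H)"
        by (simp add: algebra_simps)
      then show ?thesis by (simp add: abs_mult)
    qed
    finally show "norm (r x * (cmod (c * g x + d * h x))\<^sup>2)
        \<le> norm (2 * (cmod c)\<^sup>2 * (r x * ?G) + 2 * (cmod d)\<^sup>2 * (r x * ?H))"
      by (simp add: abs_mult)
  qed
  with m show ?thesis unfolding L2w_def by simp
qed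

lemma L2w_reflect:
  assumes "L2w r S g" "\<forall>t\<in>uminus ` S. r (-t) = r t"
  shows "L2w r (uminus ` S) (\<lambda>t. g (-t))"
proof -
  have "set_integrable lborel (uminus ` S) (\<lambda>x. r (-x) * (cmod (g (-x)))\<^sup>2)"
    using assms(1) set_integrable_reflect_iff[of S "\<lambda>x. r x * (cmod (g x))\<^sup>2"]
    unfolding L2w_def by simp
  moreover have "set_integrable lborel (uminus ` S) (\<lambda>x. r (-x) * (cmod (g (-x)))\<^sup>2)
      \<longleftrightarrow> set_integrable lborel (uminus ` S) (\<lambda>x. r x * (cmod (g (-x)))\<^sup>2)"
    using assms(2) by (intro set_integrable_cong) auto
  ultimately show ?thesis
    using assms(1) set_borel_measurable_reflect unfolding L2w_def by blast
qed

lemma normsq_reflect: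
  assumes "\<forall>t\<in>uminus ` S. r (-t) = r t" "uminus ` S \<in> sets lborel"
  shows "normsq r (uminus ` S) (\<lambda>t. g (-t)) = normsq r S g"
proof -
  have "normsq r (uminus ` S) (\<lambda>t. g (-t)) = (LINT x:uminus ` S|lborel. r (-x) * (cmod (g (-x)))\<^sup>2)"
    unfolding normsq_def using assms by (intro set_lebesgue_integral_cong) auto
  also have "\<dots> = normsq r S g"
    unfolding normsq_def by (rule set_integral_reflect_image)
  finally show ?thesis .
qed

section \<open>The differential relation under linear combination and reflection\<close>

lemma qd_lincomb:
  assumes "qd p q r I g g1 f" "qd p q r I h h1 k"
  shows "qd p q r I (\<lambda>t. c * g t + d * h t) (\<lambda>t. c * g1 t + d * h1 t) (\<lambda>t. c * f t + d * k t)"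
  unfolding qd_def
proof (intro ballI impI)
  fix x y assume xy: "x \<in> I" "y \<in> I" "x \<le> y"
  let ?F = "\<lambda>t. g1 t / complex_of_real (p t)" and ?H = "\<lambda>t. h1 t / complex_of_real (p t)"
  let ?F2 = "\<lambda>t. complex_of_real (q t) * g t - complex_of_real (r t) * f t"
  let ?H2 = "\<lambda>t. complex_of_real (q t) * h t - complex_of_real (r t) * k t"
  have g: "set_integrable lborel {x..y} ?F" "g y - g x = (LINT t:{x..y}|lborel. ?F t)"
      "set_integrable lborel {x..y} ?F2" "g1 y - g1 x = (LINT t:{x..y}|lborel. ?F2 t)"
    using assms(1) xy unfolding qd_def by blast+
  have h: "set_integrable lborel {x..y} ?H" "h y - h x = (LINT t:{x..y}|lborel. ?H t)"
      "set_integrable lborel {x..y} ?H2" "h1 y - h1 x = (LINT t:{x..y}|lborel. ?H2 t)"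
    using assms(2) xy unfolding qd_def by blast+
  have "(\<lambda>t. (c * g1 t + d * h1 t) / complex_of_real (p t)) = (\<lambda>t. c * ?F t + d * ?H t)"
    and "(\<lambda>t. complex_of_real (q t) * (c * g t + d * h t) - complex_of_real (r t) * (c * f t + d * k t))
      = (\<lambda>t. c * ?F2 t + d * ?H2 t)"
    by (auto simp: add_divide_distrib algebra_simps)
  then show "set_integrable lborel {x..y} (\<lambda>t. (c * g1 t + d * h1 t) / complex_of_real (p t)) \<and>
    (c * g y + d * h y) - (c * g x + d * h x) =
      (LINT t:{x..y}|lborel. (c * g1 t + d * h1 t) / complex_of_real (p t)) \<and>
    set_integrable lborel {x..y}
      (\<lambda>t. complex_of_real (q t) * (c * g t + d * h t) - complex_of_real (r t) * (c * f t + d * k t)) \<and>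
    (c * g1 y + d * h1 y) - (c * g1 x + d * h1 x) =
      (LINT t:{x..y}|lborel. complex_of_real (q t) * (c * g t + d * h t) - complex_of_real (r t) * (c * f t + d * k t))"
    using set_integral_lincomb[OF g(1) h(1), of c d] set_integral_lincomb[OF g(3) h(3), of c d] g(2,4) h(2,4)
    by (auto simp: algebra_simps)
qed

lemma qd_reflect:
  assumes "qd p q r (intv (-hi) (-lo)) g g1 f"
    and even: "\<forall>t\<in>intv lo hi. p (-t) = p t \<and> q (-t) = q t \<and> r (-t) = r t"
  shows "qd p q r (intv lo hi) (\<lambda>t. g (-t)) (\<lambda>t. - g1 (-t)) (\<lambda>t. f (-t))"
  unfolding qd_def
proof (intro ballI impI)
  fix x y assume xy: "x \<in> intv lo hi" "y \<in> intv lo hi" "x \<le> y"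
  let ?F = "\<lambda>t. g1 t / complex_of_real (p t)"
  let ?F2 = "\<lambda>t. complex_of_real (q t) * g t - complex_of_real (r t) * f t"
  have "-y \<in> intv (-hi) (-lo)" "-x \<in> intv (-hi) (-lo)"
    using xy(1,2) image_uminus_intv[of lo hi] by auto
  then have F: "set_integrable lborel {-y..-x} ?F" "g (-x) - g (-y) = (LINT t:{-y..-x}|lborel. ?F t)"
      "set_integrable lborel {-y..-x} ?F2" "g1 (-x) - g1 (-y) = (LINT t:{-y..-x}|lborel. ?F2 t)"
    using assms(1) xy(3) unfolding qd_def by auto
  have reflected: "set_integrable lborel {x..y} (\<lambda>t. G (-t))"
      "(LINT t:{x..y}|lborel. G (-t)) = (LINT t:{-y..-x}|lborel. G t)"
    if "set_integrable lborel {-y..-x} G" for G :: "real \<Rightarrow> complex"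
    using that set_integrable_reflect_iff[of "{-y..-x}" G] set_integral_reflect_image[of "{-y..-x}" G]
    by simp_all
  have on_xy: "- g1 (-t) / complex_of_real (p t) = (-1) * ?F (-t)"
      "complex_of_real (q t) * g (-t) - complex_of_real (r t) * f (-t) = ?F2 (-t)"
    if "t \<in> {x..y}" for t
  proof -
    have "t \<in> intv lo hi" using intv_convex[OF xy(1,2)] that by blast
    then show "- g1 (-t) / complex_of_real (p t) = (-1) * ?F (-t)"
      "complex_of_real (q t) * g (-t) - complex_of_real (r t) * f (-t) = ?F2 (-t)"
      using even by auto
  qed
  have "set_integrable lborel {x..y} (\<lambda>t. - g1 (-t) / complex_of_real (p t))"
    using set_integrable_mult_right[OF reflected(1)[OF F(1)], of "-1"]
    by (subst set_integrable_cong[OF refl refl on_xy(1)]) auto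
  moreover have "set_integrable lborel {x..y}
      (\<lambda>t. complex_of_real (q t) * g (-t) - complex_of_real (r t) * f (-t))"
    using reflected(1)[OF F(3)] by (subst set_integrable_cong[OF refl refl on_xy(2)]) auto
  moreover have "g (-y) - g (-x) = (LINT t:{x..y}|lborel. - g1 (-t) / complex_of_real (p t))"
  proof -
    have "g (-y) - g (-x) = (-1) * (LINT t:{-y..-x}|lborel. ?F t)"
      using F(2) by (simp add: algebra_simps)
    also have "\<dots> = (LINT t:{x..y}|lborel. (-1) * ?F (-t))"
      using reflected(2)[OF F(1)] by (simp only: set_integral_mult_right)
    also have "\<dots> = (LINT t:{x..y}|lborel. - g1 (-t) / complex_of_real (p t))"
      by (rule set_lebesgue_integral_cong, simp, metis on_xy(1))
    finally show ?thesis .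
  qed
  moreover have "- g1 (-y) - - g1 (-x)
      = (LINT t:{x..y}|lborel. complex_of_real (q t) * g (-t) - complex_of_real (r t) * f (-t))"
  proof -
    have "- g1 (-y) - - g1 (-x) = (LINT t:{x..y}|lborel. ?F2 (-t))"
      using F(4) reflected(2)[OF F(3)] by simp
    also have "\<dots> = (LINT t:{x..y}|lborel. complex_of_real (q t) * g (-t) - complex_of_real (r t) * f (-t))"
      by (rule set_lebesgue_integral_cong, simp, metis on_xy(2))
    finally show ?thesis .
  qed
  ultimately show "set_integrable lborel {x..y} (\<lambda>t. - g1 (-t) / complex_of_real (p t)) \<and>
    g (-y) - g (-x) = (LINT t:{x..y}|lborel. - g1 (-t) / complex_of_real (p t)) \<and>
    set_integrable lborel {x..y} (\<lambda>t. complex_of_real (q t) * g (-t) - complex_of_real (r t) * f (-t)) \<and>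
    - g1 (-y) - - g1 (-x)
      = (LINT t:{x..y}|lborel. complex_of_real (q t) * g (-t) - complex_of_real (r t) * f (-t))"
    by blast
qed

lemma bv_plus_lincomb:
  assumes "bv_plus u u1 uh uh1 g g1 b0 b1" "bv_plus u u1 uh uh1 h h1 e0 e1"
  shows "bv_plus u u1 uh uh1 (\<lambda>t. c * g t + d * h t) (\<lambda>t. c * g1 t + d * h1 t)
           (c * b0 + d * e0) (c * b1 + d * e1)"
proof -
  have "((\<lambda>x. c * (u x * g1 x - u1 x * g x) + d * (u x * h1 x - u1 x * h x))
          \<longlongrightarrow> c * (- b0) + d * (- e0)) (at_right 0)"
    using assms unfolding bv_plus_def by (intro tendsto_add tendsto_mult_left) blast+
  moreover have "((\<lambda>x. c * (uh x * g1 x - uh1 x * g x) + d * (uh x * h1 x - uh1 x * h x))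
          \<longlongrightarrow> c * b1 + d * e1) (at_right 0)"
    using assms unfolding bv_plus_def by (intro tendsto_add tendsto_mult_left) blast+
  ultimately
  show ?thesis unfolding bv_plus_def by (simp add: algebra_simps)
qed

lemma bv_minus_iff_bv_plus_reflect:
  "bv_minus u u1 uh uh1 g g1 m0 m1 \<longleftrightarrow> bv_plus u u1 uh uh1 (\<lambda>t. g (-t)) (\<lambda>t. - g1 (-t)) m0 (- m1)"
proof -
  let ?F = "\<lambda>x. uh x * g1 (-x) + uh1 x * g (-x)"
  have "(?F \<longlongrightarrow> m1) (at_right 0) \<longleftrightarrow> ((\<lambda>x. - ?F x) \<longlongrightarrow> - m1) (at_right 0)"
    using tendsto_minus_cancel_left[of ?F "- m1" "at_right 0"] by simp
  then show ?thesis
    unfolding bv_minus_def bv_plus_def filterlim_at_left_to_right[where a=0]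
    by (simp add: algebra_simps)
qed

section \<open>Coupled versus separated boundary conditions\<close>

lemma separated_condition_arccot:
  "z0 * complex_of_real (cos (arccot k)) + z1 * complex_of_real (sin (arccot k)) = 0
     \<longleftrightarrow> complex_of_real k * z0 + z1 = 0"
proof -
  have s: "sqrt (1 + k\<^sup>2) > 0" by (simp add: add_pos_nonneg)
  have cs: "cos (arccot k) = k / sqrt (1 + k\<^sup>2)" "sin (arccot k) = 1 / sqrt (1 + k\<^sup>2)"
    unfolding arccot_def by (simp_all add: sin_arctan cos_arctan cos_diff sin_diff)
  have "z0 * complex_of_real (cos (arccot k)) + z1 * complex_of_real (sin (arccot k))
      = (complex_of_real k * z0 + z1) / complex_of_real (sqrt (1 + k\<^sup>2))"
    unfolding cs using s by (simp add: field_simps)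
  then show ?thesis using s by simp
qed

lemma coupled_iff_separated:
  fixes b0 b1 m0 m1 :: complex
  assumes det: "R11 * R22 - R12 * R21 = 1" and diag: "R11 = R22"
    and alpha: "\<alpha> = (if R12 \<noteq> 0 then arccot ((R11 + 1) / R12)
                     else if R11 = -1 then arccot (- R21 / 2) else pi)"
    and alpha': "\<alpha>' = (if R12 \<noteq> 0 then arccot ((R11 - 1) / R12)
                       else if R11 = -1 then pi else arccot (R21 / 2))"
  shows "(m0 = of_real R11 * b0 + of_real R12 * b1 \<and> m1 = of_real R21 * b0 + of_real R22 * b1) \<longleftrightarrow>
    ((m0 - b0) * of_real (cos \<alpha>) + (- m1 - b1) * of_real (sin \<alpha>) = 0 \<and>
     (m0 + b0) * of_real (cos \<alpha>') + (b1 - m1) * of_real (sin \<alpha>') = 0)"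
proof (cases "R12 = 0")
  case False
  define A B where "A = complex_of_real R11" and "B = complex_of_real R12"
  have B_nonzero: "B \<noteq> 0" using False by (simp add: B_def)
  have coupled: "(m0 = A * b0 + B * b1 \<and> m1 = of_real R21 * b0 + of_real R22 * b1) \<longleftrightarrow>
      (m0 = A * b0 + B * b1 \<and> B * m1 = (A * A - 1) * b0 + A * B * b1)"
  proof -
    have "R12 * R21 = R11 * R11 - 1" using det diag by simp
    then have "B * of_real R21 = A * A - 1"
      unfolding A_def B_def by (metis of_real_1 of_real_diff of_real_mult)
    then have "B * (of_real R21 * b0 + A * b1) = (A * A - 1) * b0 + A * B * b1"
      by (simp add: distrib_left mult.assoc[symmetric] mult.commute[of A B])
    then show ?thesis using B_nonzero diag unfolding A_def by (metis mult_cancel_left)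
  qed
  have angles: "\<alpha> = arccot ((R11 + 1) / R12)" "\<alpha>' = arccot ((R11 - 1) / R12)"
    using alpha alpha' False by simp_all
  have "(m0 - b0) * of_real (cos \<alpha>) + (- m1 - b1) * of_real (sin \<alpha>) = 0
      \<longleftrightarrow> (A + 1) * (m0 - b0) = B * (m1 + b1)"
    using False unfolding angles separated_condition_arccot A_def B_def by (auto simp: field_simps)
  moreover have "(m0 + b0) * of_real (cos \<alpha>') + (b1 - m1) * of_real (sin \<alpha>') = 0
      \<longleftrightarrow> (A - 1) * (m0 + b0) = B * (m1 - b1)"
    using False unfolding angles separated_condition_arccot A_def B_def by (auto simp: field_simps)
  moreover have "(m0 = A * b0 + B * b1 \<and> B * m1 = (A * A - 1) * b0 + A * B * b1) \<longleftrightarrow>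
      ((A + 1) * (m0 - b0) = B * (m1 + b1) \<and> (A - 1) * (m0 + b0) = B * (m1 - b1))"
    by (rule iffI) algebra+
  ultimately show ?thesis using coupled unfolding A_def B_def by simp
next
  case True
  then have "R11 = 1 \<or> R11 = -1"
    using det diag by (metis diff_zero mult_zero_left square_eq_1_iff)
  then show ?thesis
  proof
    assume R11_one: "R11 = 1"
    then have angles: "\<alpha> = pi" "\<alpha>' = arccot (R21 / 2)" using alpha alpha' True by simp_all
    show ?thesis
      unfolding angles separated_condition_arccot using True diag R11_one by (auto simp: algebra_simps)
  next
    assume R11_minus_one: "R11 = -1"
    then have angles: "\<alpha> = arccot (- R21 / 2)" "\<alpha>' = pi" using alpha alpha' True by simp_all
    show ?thesis
      unfolding angles separated_condition_arccot using True diag R11_minus_one by (auto simp: algebra_simps)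
  qed
qed

section \<open>The folding map\<close>

definition inv_sqrt2 :: complex where
  "inv_sqrt2 = complex_of_real (1 / sqrt 2)"

lemma inv_sqrt2_sq: "inv_sqrt2 * (inv_sqrt2 * z) = z / 2"
  unfolding inv_sqrt2_def by (simp flip: of_real_mult mult.assoc)

definition fold_pair :: "pfun \<Rightarrow> pfun" where
  "fold_pair x = ((\<lambda>t. inv_sqrt2 * fst x (-t) + (- inv_sqrt2) * snd x t),
                  (\<lambda>t. inv_sqrt2 * fst x (-t) + inv_sqrt2 * snd x t))"

definition unfold_pair :: "pfun \<Rightarrow> pfun" where
  "unfold_pair y = ((\<lambda>t. inv_sqrt2 * fst y (-t) + inv_sqrt2 * snd y (-t)),
                    (\<lambda>t. (- inv_sqrt2) * fst y t + inv_sqrt2 * snd y t))"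

lemma unfold_fold_pair [simp]: "unfold_pair (fold_pair x) = x"
  unfolding fold_pair_def unfold_pair_def by (auto simp: fun_eq_iff algebra_simps inv_sqrt2_sq)

lemma fold_unfold_pair [simp]: "fold_pair (unfold_pair y) = y"
  unfolding fold_pair_def unfold_pair_def by (auto simp: fun_eq_iff algebra_simps inv_sqrt2_sq)

lemma fold_pair_linear: "fold_pair (padd x (psmult c y)) = padd (fold_pair x) (psmult c (fold_pair y))"
  unfolding fold_pair_def padd_def psmult_def by (auto simp: fun_eq_iff algebra_simps)

lemma norm_rotate_sq:
  "(cmod (inv_sqrt2 * h + (- inv_sqrt2) * g))\<^sup>2 + (cmod (inv_sqrt2 * h + inv_sqrt2 * g))\<^sup>2
     = (cmod h)\<^sup>2 + (cmod g)\<^sup>2"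
proof -
  have parallelogram: "(cmod (h - g))\<^sup>2 + (cmod (h + g))\<^sup>2 = 2 * (cmod h)\<^sup>2 + 2 * (cmod g)\<^sup>2"
    unfolding cmod_power2 by (simp add: power2_eq_square algebra_simps)
  have half: "(cmod inv_sqrt2)\<^sup>2 = 1/2"
    unfolding inv_sqrt2_def by (simp add: norm_divide power_divide)
  have factor: "inv_sqrt2 * h + (- inv_sqrt2) * g = inv_sqrt2 * (h - g)"
    "inv_sqrt2 * h + inv_sqrt2 * g = inv_sqrt2 * (h + g)"
    by (simp_all add: algebra_simps)
  have "(cmod (inv_sqrt2 * h + (- inv_sqrt2) * g))\<^sup>2 + (cmod (inv_sqrt2 * h + inv_sqrt2 * g))\<^sup>2
      = (cmod inv_sqrt2)\<^sup>2 * ((cmod (h - g))\<^sup>2 + (cmod (h + g))\<^sup>2)"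
    unfolding factor norm_mult power_mult_distrib by (rule distrib_left[symmetric])
  also have "\<dots> = (cmod h)\<^sup>2 + (cmod g)\<^sup>2"
    unfolding half parallelogram by simp
  finally show ?thesis .
qed

lemma normsq_rotate:
  assumes "L2w r A g" "L2w r A h" "set_borel_measurable lborel A r"
  shows "normsq r A (\<lambda>t. inv_sqrt2 * h t + (- inv_sqrt2) * g t)
       + normsq r A (\<lambda>t. inv_sqrt2 * h t + inv_sqrt2 * g t) = normsq r A h + normsq r A g"
proof -
  let ?w = "\<lambda>t. inv_sqrt2 * h t + (- inv_sqrt2) * g t" and ?v = "\<lambda>t. inv_sqrt2 * h t + inv_sqrt2 * g t"
  let ?sq = "\<lambda>F t. r t * (cmod (F t))\<^sup>2"
  have "set_integrable lborel A (?sq F)" if "L2w r A F" for F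
    using that unfolding L2w_def by blast
  then have int: "set_integrable lborel A (?sq ?w)" "set_integrable lborel A (?sq ?v)"
      "set_integrable lborel A (?sq h)" "set_integrable lborel A (?sq g)"
    using L2w_lincomb[OF assms(2,1,3)] assms(1,2) by blast+
  have pointwise: "?sq ?w t + ?sq ?v t = ?sq h t + ?sq g t" for t
    using norm_rotate_sq[of "h t" "g t"] by (metis distrib_left)
  have "normsq r A ?w + normsq r A ?v = (LINT t:A|lborel. ?sq ?w t + ?sq ?v t)"
    unfolding normsq_def using set_integral_add(2)[OF int(1,2)] by simp
  also have "\<dots> = (LINT t:A|lborel. ?sq h t + ?sq g t)"
    unfolding pointwise ..
  also have "\<dots> = normsq r A h + normsq r A g"
    unfolding normsq_def using set_integral_add(2)[OF int(3,4)] by simp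
  finally show ?thesis .
qed

lemma paeq_fold_pair:
  assumes "paeq (intv (-a) 0) (intv 0 a) x x'"
  shows "paeq (intv 0 a) (intv 0 a) (fold_pair x) (fold_pair x')"
proof -
  have h: "aeq (intv 0 a) (\<lambda>t. fst x (-t)) (\<lambda>t. fst x' (-t))"
    and g: "aeq (intv 0 a) (snd x) (snd x')"
    using assms aeq_reflect[of "intv (-a) 0"] by (auto simp: paeq_def image_uminus_intv)
  show ?thesis
    unfolding paeq_def fold_pair_def fst_conv snd_conv
    using aeq_lincomb[OF h g, of inv_sqrt2 "- inv_sqrt2"] aeq_lincomb[OF h g, of inv_sqrt2 inv_sqrt2] by blast
qed

lemma paeq_unfold_pair:
  assumes "paeq (intv 0 a) (intv 0 a) y y'"
  shows "paeq (intv (-a) 0) (intv 0 a) (unfold_pair y) (unfold_pair y')"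
proof -
  have y: "aeq (intv 0 a) (fst y) (fst y')" "aeq (intv 0 a) (snd y) (snd y')"
    using assms by (auto simp: paeq_def)
  then have "aeq (intv (-a) 0) (\<lambda>t. inv_sqrt2 * fst y (-t) + inv_sqrt2 * snd y (-t))
      (\<lambda>t. inv_sqrt2 * fst y' (-t) + inv_sqrt2 * snd y' (-t))"
    using aeq_reflect[OF aeq_lincomb[OF y]] by (simp add: image_uminus_intv)
  with aeq_lincomb[OF y, of "- inv_sqrt2" inv_sqrt2] show ?thesis
    unfolding paeq_def unfold_pair_def fst_conv snd_conv by blast
qed

lemma in_graph_transfer:
  assumes UG: "\<And>x f. G1 x f \<Longrightarrow> G2 (U x) (U f)" and VG: "\<And>y k. G2 y k \<Longrightarrow> G1 (V y) (V k)"
    and U_aeq: "\<And>x x'. paeq A1 A2 x x' \<Longrightarrow> paeq B1 B2 (U x) (U x')"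
    and V_aeq: "\<And>y y'. paeq B1 B2 y y' \<Longrightarrow> paeq A1 A2 (V y) (V y')"
    and VU: "\<And>x. V (U x) = x"
  shows "in_graph A1 A2 G1 x f \<longleftrightarrow> in_graph B1 B2 G2 (U x) (U f)"
proof
  assume "in_graph A1 A2 G1 x f"
  then show "in_graph B1 B2 G2 (U x) (U f)"
    unfolding in_graph_def using UG U_aeq by blast
next
  assume "in_graph B1 B2 G2 (U x) (U f)"
  then obtain y k where y: "paeq B1 B2 (U x) y" and k: "paeq B1 B2 (U f) k" and "G2 y k"
    unfolding in_graph_def by blast
  then have "paeq A1 A2 x (V y)" "paeq A1 A2 f (V k)" "G1 (V y) (V k)"
    using V_aeq[OF y] V_aeq[OF k] VG by (simp_all add: VU)
  then show "in_graph A1 A2 G1 x f"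
    unfolding in_graph_def by blast
qed

context
  fixes p q r :: "real \<Rightarrow> real" and a :: ereal
  assumes even: "\<forall>x\<in>intv 0 a. p (-x) = p x \<and> q (-x) = q x \<and> r (-x) = r x"
    and r_meas: "set_borel_measurable lborel (intv 0 a) r"
begin

lemma even_left: "\<forall>x\<in>intv (-a) 0. p (-x) = p x \<and> q (-x) = q x \<and> r (-x) = r x"
  using even image_uminus_intv[of 0 a] by force

lemma L2w_reflect_left:
  "L2w r (intv (-a) 0) g \<Longrightarrow> L2w r (intv 0 a) (\<lambda>t. g (-t))"
  using L2w_reflect[of r "intv (-a) 0" g] even by (simp add: image_uminus_intv)

lemma L2pair_fold_pair:
  assumes "L2pair r (intv (-a) 0) (intv 0 a) x"
  shows "L2pair r (intv 0 a) (intv 0 a) (fold_pair x)"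
proof -
  have h: "L2w r (intv 0 a) (\<lambda>t. fst x (-t))" and g: "L2w r (intv 0 a) (snd x)"
    using assms L2w_reflect_left by (auto simp: L2pair_def)
  show ?thesis
    unfolding L2pair_def fold_pair_def fst_conv snd_conv
    using L2w_lincomb[OF h g r_meas, of inv_sqrt2 "- inv_sqrt2"] L2w_lincomb[OF h g r_meas, of inv_sqrt2 inv_sqrt2]
    by blast
qed

lemma L2pair_unfold_pair:
  assumes "L2pair r (intv 0 a) (intv 0 a) y"
  shows "L2pair r (intv (-a) 0) (intv 0 a) (unfold_pair y)"
proof -
  have y: "L2w r (intv 0 a) (fst y)" "L2w r (intv 0 a) (snd y)"
    using assms by (auto simp: L2pair_def)
  then have "L2w r (intv (-a) 0) (\<lambda>t. inv_sqrt2 * fst y (-t) + inv_sqrt2 * snd y (-t))"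
    using L2w_reflect[OF L2w_lincomb[OF y r_meas]] even_left by (simp add: image_uminus_intv)
  with L2w_lincomb[OF y r_meas, of "- inv_sqrt2" inv_sqrt2] show ?thesis
    unfolding L2pair_def unfold_pair_def fst_conv snd_conv by blast
qed

lemma pnormsq_fold_pair:
  assumes "L2pair r (intv (-a) 0) (intv 0 a) x"
  shows "pnormsq r (intv 0 a) (intv 0 a) (fold_pair x) = pnormsq r (intv (-a) 0) (intv 0 a) x"
proof -
  have h: "L2w r (intv 0 a) (\<lambda>t. fst x (-t))" and g: "L2w r (intv 0 a) (snd x)"
    using assms L2w_reflect_left by (auto simp: L2pair_def)
  have "pnormsq r (intv 0 a) (intv 0 a) (fold_pair x)
      = normsq r (intv 0 a) (\<lambda>t. fst x (-t)) + normsq r (intv 0 a) (snd x)"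
    unfolding pnormsq_def fold_pair_def fst_conv snd_conv by (rule normsq_rotate[OF g h r_meas])
  also have "\<dots> = pnormsq r (intv (-a) 0) (intv 0 a) x"
    using normsq_reflect[of "intv (-a) 0" r "fst x"] even intv_sets[of 0 a]
    by (simp add: pnormsq_def image_uminus_intv)
  finally show ?thesis .
qed

lemma fold_pair_boundary_values:
  assumes "qd p q r (intv (-a) 0) (fst x) gm1 (fst f)" "qd p q r (intv 0 a) (snd x) gp1 (snd f)"
    and "bv_minus u u1 uh uh1 (fst x) gm1 m0 m1" "bv_plus u u1 uh uh1 (snd x) gp1 b0 b1"
  obtains w1 v1 where "qd p q r (intv 0 a) (fst (fold_pair x)) w1 (fst (fold_pair f))"
    "bv_plus u u1 uh uh1 (fst (fold_pair x)) w1
       (inv_sqrt2 * m0 + (- inv_sqrt2) * b0) (inv_sqrt2 * (- m1) + (- inv_sqrt2) * b1)"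
    "qd p q r (intv 0 a) (snd (fold_pair x)) v1 (snd (fold_pair f))"
    "bv_plus u u1 uh uh1 (snd (fold_pair x)) v1
       (inv_sqrt2 * m0 + inv_sqrt2 * b0) (inv_sqrt2 * (- m1) + inv_sqrt2 * b1)"
proof -
  have qh: "qd p q r (intv 0 a) (\<lambda>t. fst x (-t)) (\<lambda>t. - gm1 (-t)) (\<lambda>t. fst f (-t))"
    using qd_reflect[of p q r a 0] assms(1) even by simp
  have bh: "bv_plus u u1 uh uh1 (\<lambda>t. fst x (-t)) (\<lambda>t. - gm1 (-t)) m0 (- m1)"
    using assms(3) by (simp add: bv_minus_iff_bv_plus_reflect)
  show ?thesis
    using that qd_lincomb[OF qh assms(2)] bv_plus_lincomb[OF bh assms(4)]
    unfolding fold_pair_def fst_conv snd_conv by blast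
qed

lemma unfold_pair_boundary_values:
  assumes "qd p q r (intv 0 a) (fst y) w1 (fst k)" "qd p q r (intv 0 a) (snd y) v1 (snd k)"
    and "bv_plus u u1 uh uh1 (fst y) w1 e0 e1" "bv_plus u u1 uh uh1 (snd y) v1 c0 c1"
  obtains gm1 gp1 where "qd p q r (intv (-a) 0) (fst (unfold_pair y)) gm1 (fst (unfold_pair k))"
    "bv_minus u u1 uh uh1 (fst (unfold_pair y)) gm1
       (inv_sqrt2 * e0 + inv_sqrt2 * c0) (- (inv_sqrt2 * e1 + inv_sqrt2 * c1))"
    "qd p q r (intv 0 a) (snd (unfold_pair y)) gp1 (snd (unfold_pair k))"
    "bv_plus u u1 uh uh1 (snd (unfold_pair y)) gp1
       ((- inv_sqrt2) * e0 + inv_sqrt2 * c0) ((- inv_sqrt2) * e1 + inv_sqrt2 * c1)"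
proof -
  let ?gm1 = "\<lambda>t. - (inv_sqrt2 * w1 (-t) + inv_sqrt2 * v1 (-t))"
  have "qd p q r (intv (-a) 0) (fst (unfold_pair y)) ?gm1 (fst (unfold_pair k))"
    using qd_reflect[of p q r 0 "-a", unfolded ereal_uminus_zero ereal_uminus_uminus,
        OF qd_lincomb[OF assms(1,2)] even_left]
    unfolding unfold_pair_def fst_conv .
  moreover have "bv_minus u u1 uh uh1 (fst (unfold_pair y)) ?gm1
      (inv_sqrt2 * e0 + inv_sqrt2 * c0) (- (inv_sqrt2 * e1 + inv_sqrt2 * c1))"
    unfolding unfold_pair_def fst_conv bv_minus_iff_bv_plus_reflect minus_minus
    by (rule bv_plus_lincomb[OF assms(3,4)])
  ultimately show ?thesis
    using that qd_lincomb[OF assms(1,2)] bv_plus_lincomb[OF assms(3,4)]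
    unfolding unfold_pair_def snd_conv by blast
qed

context
  fixes u u1 uh uh1 :: "real \<Rightarrow> complex" and R11 R12 R21 R22 \<alpha> \<alpha>' :: real
  assumes decouple: "\<And>b0 b1 m0 m1 :: complex.
    (m0 = of_real R11 * b0 + of_real R12 * b1 \<and> m1 = of_real R21 * b0 + of_real R22 * b1) \<longleftrightarrow>
    ((m0 - b0) * of_real (cos \<alpha>) + (- m1 - b1) * of_real (sin \<alpha>) = 0 \<and>
     (m0 + b0) * of_real (cos \<alpha>') + (b1 - m1) * of_real (sin \<alpha>') = 0)"
begin

lemma SR0rel_fold_pair:
  assumes "SR0rel p q r a u u1 uh uh1 R11 R12 R21 R22 x f"
  shows "Talpha p q r a u u1 uh uh1 \<alpha> (fst (fold_pair x)) (fst (fold_pair f)) \<and>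
         Talpha p q r a u u1 uh uh1 \<alpha>' (snd (fold_pair x)) (snd (fold_pair f))"
proof -
  obtain gm1 gp1 m0 m1 b0 b1 where
    qm: "qd p q r (intv (-a) 0) (fst x) gm1 (fst f)" and qp: "qd p q r (intv 0 a) (snd x) gp1 (snd f)"
    and bm: "bv_minus u u1 uh uh1 (fst x) gm1 m0 m1" and bp: "bv_plus u u1 uh uh1 (snd x) gp1 b0 b1"
    and coupled: "m0 = of_real R11 * b0 + of_real R12 * b1 \<and> m1 = of_real R21 * b0 + of_real R22 * b1"
    using assms unfolding SR0rel_def by blast
  have L2: "L2pair r (intv 0 a) (intv 0 a) (fold_pair x)" "L2pair r (intv 0 a) (intv 0 a) (fold_pair f)"
    using assms L2pair_fold_pair unfolding SR0rel_def Smaxrel_def maxrel_def L2pair_def by auto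
  have "(m0 - b0) * of_real (cos \<alpha>) + (- m1 - b1) * of_real (sin \<alpha>) = 0"
      "(m0 + b0) * of_real (cos \<alpha>') + (b1 - m1) * of_real (sin \<alpha>') = 0"
    using decouple coupled by blast+
  moreover have "(inv_sqrt2 * m0 + (- inv_sqrt2) * b0) * of_real (cos \<alpha>)
      + (inv_sqrt2 * (- m1) + (- inv_sqrt2) * b1) * of_real (sin \<alpha>)
      = inv_sqrt2 * ((m0 - b0) * of_real (cos \<alpha>) + (- m1 - b1) * of_real (sin \<alpha>))"
    and "(inv_sqrt2 * m0 + inv_sqrt2 * b0) * of_real (cos \<alpha>')
      + (inv_sqrt2 * (- m1) + inv_sqrt2 * b1) * of_real (sin \<alpha>')
      = inv_sqrt2 * ((m0 + b0) * of_real (cos \<alpha>') + (b1 - m1) * of_real (sin \<alpha>'))"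
    by (simp_all add: algebra_simps)
  moreover obtain w1 v1 where "qd p q r (intv 0 a) (fst (fold_pair x)) w1 (fst (fold_pair f))"
    "bv_plus u u1 uh uh1 (fst (fold_pair x)) w1
       (inv_sqrt2 * m0 + (- inv_sqrt2) * b0) (inv_sqrt2 * (- m1) + (- inv_sqrt2) * b1)"
    "qd p q r (intv 0 a) (snd (fold_pair x)) v1 (snd (fold_pair f))"
    "bv_plus u u1 uh uh1 (snd (fold_pair x)) v1
       (inv_sqrt2 * m0 + inv_sqrt2 * b0) (inv_sqrt2 * (- m1) + inv_sqrt2 * b1)"
    by (rule fold_pair_boundary_values[OF qm qp bm bp])
  ultimately show ?thesis
    unfolding Talpha_def maxrel_def using L2[unfolded L2pair_def] by (metis mult_zero_right)
qed

lemma Talpha_unfold_pair: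
  assumes "Talpha p q r a u u1 uh uh1 \<alpha> (fst y) (fst k)" "Talpha p q r a u u1 uh uh1 \<alpha>' (snd y) (snd k)"
  shows "SR0rel p q r a u u1 uh uh1 R11 R12 R21 R22 (unfold_pair y) (unfold_pair k)"
proof -
  obtain w1 e0 e1 where qw: "qd p q r (intv 0 a) (fst y) w1 (fst k)"
    and bw: "bv_plus u u1 uh uh1 (fst y) w1 e0 e1"
    and cw: "e0 * of_real (cos \<alpha>) + e1 * of_real (sin \<alpha>) = 0"
    using assms(1) unfolding Talpha_def by blast
  obtain v1 c0 c1 where qv: "qd p q r (intv 0 a) (snd y) v1 (snd k)"
    and bv: "bv_plus u u1 uh uh1 (snd y) v1 c0 c1"
    and cv: "c0 * of_real (cos \<alpha>') + c1 * of_real (sin \<alpha>') = 0"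
    using assms(2) unfolding Talpha_def by blast
  have L2: "L2pair r (intv (-a) 0) (intv 0 a) (unfold_pair y)"
      "L2pair r (intv (-a) 0) (intv 0 a) (unfold_pair k)"
    using assms L2pair_unfold_pair unfolding Talpha_def maxrel_def L2pair_def by auto
  define m0 m1 b0 b1 where "m0 = inv_sqrt2 * e0 + inv_sqrt2 * c0"
    and "m1 = - (inv_sqrt2 * e1 + inv_sqrt2 * c1)"
    and "b0 = (- inv_sqrt2) * e0 + inv_sqrt2 * c0" and "b1 = (- inv_sqrt2) * e1 + inv_sqrt2 * c1"
  have "(m0 - b0) * of_real (cos \<alpha>) + (- m1 - b1) * of_real (sin \<alpha>)
      = 2 * inv_sqrt2 * (e0 * of_real (cos \<alpha>) + e1 * of_real (sin \<alpha>))"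
    and "(m0 + b0) * of_real (cos \<alpha>') + (b1 - m1) * of_real (sin \<alpha>')
      = 2 * inv_sqrt2 * (c0 * of_real (cos \<alpha>') + c1 * of_real (sin \<alpha>'))"
    unfolding m0_def m1_def b0_def b1_def by (simp_all add: algebra_simps)
  with cw cv have "(m0 - b0) * of_real (cos \<alpha>) + (- m1 - b1) * of_real (sin \<alpha>) = 0 \<and>
      (m0 + b0) * of_real (cos \<alpha>') + (b1 - m1) * of_real (sin \<alpha>') = 0"
    by simp
  then have "m0 = of_real R11 * b0 + of_real R12 * b1 \<and> m1 = of_real R21 * b0 + of_real R22 * b1"
    by (rule decouple[THEN iffD2])
  moreover obtain gm1 gp1 where
    "qd p q r (intv (-a) 0) (fst (unfold_pair y)) gm1 (fst (unfold_pair k))"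
    "bv_minus u u1 uh uh1 (fst (unfold_pair y)) gm1 m0 m1"
    "qd p q r (intv 0 a) (snd (unfold_pair y)) gp1 (snd (unfold_pair k))"
    "bv_plus u u1 uh uh1 (snd (unfold_pair y)) gp1 b0 b1"
    unfolding m0_def m1_def b0_def b1_def by (rule unfold_pair_boundary_values[OF qw qv bw bv])
  ultimately show ?thesis
    unfolding SR0rel_def Smaxrel_def maxrel_def using L2[unfolded L2pair_def] by blast
qed

end

end

theorem theorem4p9:
  fixes p q r :: "real \<Rightarrow> real" and a :: ereal and lam0 :: real
    and u u1 uh uh1 :: "real \<Rightarrow> complex"
    and R11 R12 R21 R22 \<alpha> \<alpha>' :: real
  assumes a_pos: "0 < a"
    and meas: "set_borel_measurable lborel (intv (-a) 0 \<union> intv 0 a) p"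
              "set_borel_measurable lborel (intv (-a) 0 \<union> intv 0 a) q"
              "set_borel_measurable lborel (intv (-a) 0 \<union> intv 0 a) r"
    and even: "\<forall>x\<in>intv 0 a. p (-x) = p x \<and> q (-x) = q x \<and> r (-x) = r x"
    and pos: "AE x in lborel. x \<in> intv (-a) 0 \<union> intv 0 a \<longrightarrow> p x > 0 \<and> r x > 0"
    and loc_int: "\<forall>c d. {c..d} \<subseteq> intv (-a) 0 \<longrightarrow>
         set_integrable lborel {c..d} (\<lambda>x. 1 / p x) \<and> set_integrable lborel {c..d} q \<and>
         set_integrable lborel {c..d} r"
    and LP_minus_a: "\<not> LC_left p q r (-a) 0"
    and LP_plus_a: "\<not> LC_right p q r 0 a"
    and LCNO_0minus: "LC_right p q r (-a) 0" "nonosc_right p q r (-a) 0"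
    and LCNO_0plus: "LC_left p q r 0 a" "nonosc_left p q r 0 a"
    and bounded_below: "\<forall>x f. Sminrel p q r a x f \<longrightarrow>
         pinner r (intv (-a) 0) (intv 0 a) f x \<in> \<real> \<and>
         Re (pinner r (intv (-a) 0) (intv 0 a) f x) \<ge> lam0 * pnormsq r (intv (-a) 0) (intv 0 a) x"
    and u_sol: "solves p q r (intv 0 a) (complex_of_real lam0) u u1"
    and u_real: "\<forall>t\<in>intv 0 a. u t \<in> \<real> \<and> u1 t \<in> \<real>"
    and u_principal: "\<exists>c. 0 < c \<and> ereal c < a \<and> (\<forall>t\<in>{0<..<c}. u t \<noteq> 0) \<and>
         set_nn_integral lborel {0<..<c} (\<lambda>t. ennreal (1 / (p t * (Re (u t))\<^sup>2))) = \<infinity>"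
    and uh_sol: "solves p q r (intv 0 a) (complex_of_real lam0) uh uh1"
    and uh_real: "\<forall>t\<in>intv 0 a. uh t \<in> \<real> \<and> uh1 t \<in> \<real>"
    and wronskian: "\<forall>t\<in>intv 0 a. uh t * u1 t - uh1 t * u t = 1"
    and R0_SL2: "R11 * R22 - R12 * R21 = 1"
    and R0_diag: "R11 = R22"
    and alpha_def: "\<alpha> = (if R12 \<noteq> 0 then arccot ((R11 + 1) / R12)
                         else if R11 = -1 then arccot (- R21 / 2) else pi)"
    and alpha'_def: "\<alpha>' = (if R12 \<noteq> 0 then arccot ((R11 - 1) / R12)
                         else if R11 = -1 then pi else arccot (R21 / 2))"
  shows "unit_equiv r (intv (-a) 0) (intv 0 a) (SR0rel p q r a u u1 uh uh1 R11 R12 R21 R22)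
                    r (intv 0 a) (intv 0 a)
                    (\<lambda>x f. Talpha p q r a u u1 uh uh1 \<alpha> (fst x) (fst f) \<and>
                           Talpha p q r a u u1 uh uh1 \<alpha>' (snd x) (snd f))"
proof -
  let ?Im = "intv (-a) 0" and ?Ip = "intv 0 a"
  have r_meas: "set_borel_measurable lborel ?Ip r"
    using intv_sets[of 0 a] by (intro set_borel_measurable_subset[OF meas(3)]) auto
  note decouple = coupled_iff_separated[OF R0_SL2 R0_diag alpha_def alpha'_def]
  have graphs: "in_graph ?Im ?Ip (SR0rel p q r a u u1 uh uh1 R11 R12 R21 R22) x f \<longleftrightarrow>
      in_graph ?Ip ?Ip (\<lambda>x f. Talpha p q r a u u1 uh uh1 \<alpha> (fst x) (fst f) \<and>
                             Talpha p q r a u u1 uh uh1 \<alpha>' (snd x) (snd f))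
        (fold_pair x) (fold_pair f)" for x f
    by (rule in_graph_transfer[where V = unfold_pair])
      (use SR0rel_fold_pair[OF even r_meas decouple] Talpha_unfold_pair[OF even r_meas decouple]
         paeq_fold_pair paeq_unfold_pair in auto)
  show ?thesis
    unfolding unit_equiv_def
  proof (intro exI[of _ fold_pair] conjI allI impI)
    fix y assume "L2pair r ?Ip ?Ip y"
    then show "\<exists>x. L2pair r ?Im ?Ip x \<and> paeq ?Ip ?Ip (fold_pair x) y"
      using L2pair_unfold_pair[OF even r_meas] by (intro exI[of _ "unfold_pair y"]) (simp add: paeq_def aeq_def)
  qed (simp_all add: L2pair_fold_pair[OF even r_meas] pnormsq_fold_pair[OF even r_meas]
      fold_pair_linear paeq_def aeq_def graphs)
qed

end
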